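(* Let $R$ be an irreducible root system spanning a rational vector space $L$, with Weyl group $W(R)$. Then ${\rm rk}(R)+1\leqslant{\rm sep}(R)\leqslant|W(R)|$.
   Context: For $l\in L^*$ put $l^+=\{x\in L\mid l(x)\geqslant0\}$ and $l^0=\{x\in L\mid l(x)=0\}$. The separation index ${\rm sep}(R)$ is the minimal length $n$ of a sequence $C_1,\ldots,C_n$ of Weyl chambers of $R$ such that for every nonzero $l\in L^*$ there is $i\in[1,n]$ with $\overline{C_i}\subset l^+$ and $\overline{C_i}\cap l^0=\{0\}$ (closures taken in $L$). *)

theory Defs
  imports "HOL-Analysis.Analysis"
begin

text \<open>The rational vector space L is modelled as rat^'n (every finite-dimensional
  Q-vector space is isomorphic to one of these; the dimension is CARD('n)).
  Linear forms on rat^'n are represented by vectors via the standard pairing qdot.\<close>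

definition qdot :: "rat ^ 'n \<Rightarrow> rat ^ 'n \<Rightarrow> rat" where
  "qdot x y = (\<Sum>i\<in>UNIV. x $ i * y $ i)"

definition qrefl :: "(rat ^ 'n \<Rightarrow> rat ^ 'n) \<Rightarrow> rat ^ 'n \<Rightarrow> rat ^ 'n \<Rightarrow> rat ^ 'n" where
  "qrefl cor \<alpha> x = x - qdot (cor \<alpha>) x *s \<alpha>"

definition root_system :: "(rat ^ 'n) set \<Rightarrow> (rat ^ 'n \<Rightarrow> rat ^ 'n) \<Rightarrow> bool" where
  "root_system R cor \<longleftrightarrow> finite R \<and> 0 \<notin> R \<and>
     (\<forall>x. \<exists>c. x = (\<Sum>\<alpha>\<in>R. c \<alpha> *s \<alpha>)) \<and>
     (\<forall>\<alpha>\<in>R. qdot (cor \<alpha>) \<alpha> = 2 \<and>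
        (\<forall>\<beta>\<in>R. qrefl cor \<alpha> \<beta> \<in> R \<and> qdot (cor \<alpha>) \<beta> \<in> \<int>))"

definition irreducible_rs :: "(rat ^ 'n) set \<Rightarrow> (rat ^ 'n \<Rightarrow> rat ^ 'n) \<Rightarrow> bool" where
  "irreducible_rs R cor \<longleftrightarrow> R \<noteq> {} \<and>
     \<not> (\<exists>R1 R2. R1 \<noteq> {} \<and> R2 \<noteq> {} \<and> R1 \<union> R2 = R \<and> R1 \<inter> R2 = {} \<and>
            (\<forall>\<alpha>\<in>R1. \<forall>\<beta>\<in>R2. qdot (cor \<alpha>) \<beta> = 0))"

inductive_set weyl_group :: "(rat ^ 'n) set \<Rightarrow> (rat ^ 'n \<Rightarrow> rat ^ 'n)
    \<Rightarrow> (rat ^ 'n \<Rightarrow> rat ^ 'n) set" for R cor where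
  id: "id \<in> weyl_group R cor"
| refl: "w \<in> weyl_group R cor \<Longrightarrow> \<alpha> \<in> R \<Longrightarrow> qrefl cor \<alpha> \<circ> w \<in> weyl_group R cor"

text \<open>Weyl chambers: the classes of regular points (off all reflecting hyperplanes)
  with a common sign pattern, i.e. the connected components of the complement of
  the hyperplanes (over the reals).\<close>
definition weyl_chamber :: "(rat ^ 'n) set \<Rightarrow> (rat ^ 'n \<Rightarrow> rat ^ 'n) \<Rightarrow> (rat ^ 'n) set \<Rightarrow> bool" where
  "weyl_chamber R cor C \<longleftrightarrow> (\<exists>x. (\<forall>\<alpha>\<in>R. qdot (cor \<alpha>) x \<noteq> 0) \<and>
      C = {y. \<forall>\<alpha>\<in>R. qdot (cor \<alpha>) y * qdot (cor \<alpha>) x > 0})"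

definition qclosure :: "(rat ^ 'n) set \<Rightarrow> (rat ^ 'n) set" where
  "qclosure S = {y. \<forall>e>0. \<exists>x\<in>S. \<forall>i. \<bar>y $ i - x $ i\<bar> < e}"

definition lplus :: "rat ^ 'n \<Rightarrow> (rat ^ 'n) set" where
  "lplus l = {x. qdot l x \<ge> 0}"

definition lzero :: "rat ^ 'n \<Rightarrow> (rat ^ 'n) set" where
  "lzero l = {x. qdot l x = 0}"

definition separating_seq :: "(rat ^ 'n) set \<Rightarrow> (rat ^ 'n \<Rightarrow> rat ^ 'n) \<Rightarrow> (rat ^ 'n) set list \<Rightarrow> bool" where
  "separating_seq R cor Cs \<longleftrightarrow> (\<forall>C\<in>set Cs. weyl_chamber R cor C) \<and>
     (\<forall>l. l \<noteq> 0 \<longrightarrow> (\<exists>C\<in>set Cs. qclosure C \<subseteq> lplus l \<and> qclosure C \<inter> lzero l = {0}))"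

definition sep :: "(rat ^ 'n) set \<Rightarrow> (rat ^ 'n \<Rightarrow> rat ^ 'n) \<Rightarrow> nat" where
  "sep R cor = (LEAST n. \<exists>Cs. length Cs = n \<and> separating_seq R cor Cs)"

text \<open>Rank of R = dimension of the spanned space L = CARD('n).\<close>

end

theory Submission
  imports Defs
begin

text \<open>Averaging the standard pairing over the finite Weyl group W gives a W-invariant inner product,
  for which each coroot pairing has the sign of the product with the root.

  Upper bound: list the chambers of the W-orbit of a regular point x. Given l \<noteq> 0, choose w \<in> W
  maximising l(w x); then l is nonnegative on the positive roots defined by w x, and every nonzero
  point y of the closed chamber of w x is dominant. By irreducibility y is a combination of all simple
  roots with strictly positive coefficients, and l, being nonnegative on the simple roots and not
  zero on all of them (they span), satisfies l(y) > 0.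

  Lower bound: pick a nonzero point in the closure of each chamber of a sequence of length at most
  rk(R). Some l \<noteq> 0 vanishes at all of these points but the first and is nonpositive there, so no
  chamber of the sequence lies strictly on the positive side of l.\<close>

lemma qdot_commute: "qdot x y = qdot y x"
  unfolding qdot_def by (simp add: mult.commute)

lemma qdot_add_right: "qdot x (y + z) = qdot x y + qdot x z"
  unfolding qdot_def by (simp add: algebra_simps sum.distrib)

lemma qdot_diff_right: "qdot x (y - z) = qdot x y - qdot x z"
  unfolding qdot_def by (simp add: algebra_simps sum_subtractf)

lemma qdot_scale_right: "qdot x (c *s y) = c * qdot x y"
  unfolding qdot_def by (simp add: algebra_simps sum_distrib_left)

lemma qdot_scale_left: "qdot (c *s x) y = c * qdot x y"
  unfolding qdot_def by (simp add: algebra_simps sum_distrib_left)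

lemma qdot_minus_left: "qdot (- x) y = - qdot x y"
  unfolding qdot_def by (simp add: sum_negf)

lemma qdot_zero_right [simp]: "qdot x 0 = 0"
  unfolding qdot_def by simp

lemma qdot_sum_right: "qdot x (sum f A) = (\<Sum>a\<in>A. qdot x (f a))"
  unfolding qdot_def by (simp add: sum_distrib_left sum.swap[of _ UNIV A])

lemma qdot_self_nonneg: "qdot x x \<ge> 0"
  unfolding qdot_def by (simp add: sum_nonneg)

lemma qdot_self_pos: "x \<noteq> 0 \<Longrightarrow> qdot x x > 0"
proof -
  assume "x \<noteq> 0"
  then obtain i where "x $ i \<noteq> 0" by (auto simp: vec_eq_iff)
  then show "qdot x x > 0"
    unfolding qdot_def by (intro sum_pos2[of _ i]) (auto simp: zero_less_mult_iff linorder_neq_iff)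
qed

lemma qdot_self_eq_0: "qdot x x = 0 \<longleftrightarrow> x = 0"
  by (metis less_irrefl qdot_self_pos qdot_zero_right)

lemma ex_not_orthogonal:
  fixes F :: "(rat ^ 'n) set"
  assumes "finite F" and "0 \<notin> F"
  shows "\<exists>x. \<forall>f\<in>F. qdot f x \<noteq> 0"
  using assms
proof (induction F rule: finite_induct)
  case empty
  then show ?case by simp
next
  case (insert g F)
  then obtain x where x: "\<forall>f\<in>F. qdot f x \<noteq> 0" by auto
  \<comment> \<open>Move x along g, avoiding the finitely many parameters where a form of F vanishes.\<close>
  let ?bad = "insert 0 ((\<lambda>f. - qdot f x / qdot f g) ` F)"
  obtain t :: rat where t: "t \<notin> ?bad"
    using ex_new_if_finite[OF infinite_UNIV_char_0, of ?bad] insert.hyps(1) by blast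
  show ?case
  proof (cases "qdot g x = 0")
    case False
    then show ?thesis using x by auto
  next
    case True
    have "qdot f (x + t *s g) \<noteq> 0" if f: "f \<in> insert g F" for f
    proof (cases "f = g")
      case True
      then show ?thesis
        using \<open>qdot g x = 0\<close> t qdot_self_pos[of g] insert.prems
        by (simp add: qdot_add_right qdot_scale_right)
    next
      case False
      then have "f \<in> F" using f by simp
      moreover have "t \<noteq> - qdot f x / qdot f g" using t \<open>f \<in> F\<close> by auto
      ultimately show ?thesis
        using x by (cases "qdot f g = 0") (auto simp: qdot_add_right qdot_scale_right field_simps)
    qed
    then show ?thesis by blast
  qed
qed

lemma ex_orthogonal_nonzero:
  fixes X :: "(rat ^ 'n) set"
  assumes "finite X" and "card X < CARD('n)"
  shows "\<exists>l. l \<noteq> 0 \<and> (\<forall>x\<in>X. qdot x l = 0)"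
proof -
  obtain g :: "rat ^ 'n \<Rightarrow> 'n" where g: "inj_on g X"
    using card_le_inj[of X "UNIV :: 'n set"] assms by auto
  have "card (g ` X) < CARD('n)" using card_image[OF g] assms(2) by simp
  then have "g ` X \<noteq> UNIV" by auto
  then obtain j where j: "j \<notin> g ` X" by blast
  \<comment> \<open>The matrix with rows X (placed by g) has the zero row j, hence a nontrivial kernel.\<close>
  define A :: "rat ^ 'n ^ 'n" where "A = (\<chi> i. if i \<in> g ` X then the_inv_into X g i else 0)"
  have "det A = 0" using j by (intro det_zero_row(2)[of j]) (simp add: A_def row_def vec_eq_iff)
  then obtain u v where uv: "A *v u = A *v v" "u \<noteq> v"
    using det_nz_iff_inj_gen[OF matrix_vector_mul_linear_gen[of A]] unfolding inj_def by auto
  have row: "(A *v w) $ g x = qdot x w" if "x \<in> X" for x w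
    using the_inv_into_f_f[OF g that] that
    by (simp add: A_def matrix_vector_mult_def qdot_def)
  have "qdot x (u - v) = 0" if "x \<in> X" for x
    using row[OF that, of u] row[OF that, of v] uv(1) by (simp add: qdot_diff_right)
  then show ?thesis using uv(2) by (intro exI[of _ "u - v"]) auto
qed

lemma subset_qclosure: "S \<subseteq> qclosure S"
  unfolding qclosure_def by force

lemma qdot_diff_bound:
  assumes "\<forall>i. \<bar>y $ i - x $ i\<bar> < e"
  shows "\<bar>qdot f y - qdot f x\<bar> \<le> (\<Sum>i\<in>UNIV. \<bar>f $ i\<bar>) * e"
proof -
  have "\<bar>qdot f y - qdot f x\<bar> = \<bar>\<Sum>i\<in>UNIV. f $ i * (y $ i - x $ i)\<bar>"
    unfolding qdot_def by (simp add: sum_subtractf right_diff_distrib)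
  also have "\<dots> \<le> (\<Sum>i\<in>UNIV. \<bar>f $ i * (y $ i - x $ i)\<bar>)"
    by (rule sum_abs)
  also have "\<dots> \<le> (\<Sum>i\<in>UNIV. \<bar>f $ i\<bar> * e)"
    using assms by (intro sum_mono) (simp add: abs_mult mult_left_mono less_imp_le)
  finally show ?thesis by (simp add: sum_distrib_right)
qed

lemma qclosure_halfspace:
  assumes "\<forall>x\<in>S. qdot f x > 0" and "y \<in> qclosure S"
  shows "qdot f y \<ge> 0"
proof (rule ccontr)
  assume "\<not> qdot f y \<ge> 0"
  define M where "M = (\<Sum>i\<in>UNIV. \<bar>f $ i\<bar>)"
  have M: "M \<ge> 0" unfolding M_def by (simp add: sum_nonneg)
  define e where "e = - qdot f y / (M + 1)"
  have "e > 0" using \<open>\<not> qdot f y \<ge> 0\<close> M by (simp add: e_def divide_neg_pos)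
  then obtain x where "x \<in> S" and "\<forall>i. \<bar>y $ i - x $ i\<bar> < e"
    using assms(2) unfolding qclosure_def by blast
  then have "qdot f x \<le> qdot f y + M * e"
    using qdot_diff_bound[of y x e f] by (simp add: M_def abs_le_iff)
  also have "M * e < - qdot f y"
    using \<open>\<not> qdot f y \<ge> 0\<close> M by (simp add: e_def field_simps)
  finally show False using assms(1) \<open>x \<in> S\<close> by fastforce
qed

lemma zero_in_qclosure:
  assumes "\<And>t. t > 0 \<Longrightarrow> t *s z \<in> S"
  shows "0 \<in> qclosure S"
  unfolding qclosure_def
proof (intro CollectI allI impI)
  fix e :: rat
  assume "e > 0"
  define M where "M = (\<Sum>i\<in>UNIV. \<bar>z $ i\<bar>)"
  have M: "M \<ge> 0" unfolding M_def by (simp add: sum_nonneg)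
  define t where "t = e / (M + 1)"
  have t: "t > 0" using \<open>e > 0\<close> M by (simp add: t_def)
  have "\<bar>(t *s z) $ i\<bar> < e" for i
  proof -
    have "\<bar>z $ i\<bar> \<le> M" unfolding M_def by (rule member_le_sum) auto
    then have "\<bar>(t *s z) $ i\<bar> \<le> t * M" using t by (simp add: abs_mult mult_left_mono)
    also have "\<dots> < e" using \<open>e > 0\<close> M by (simp add: t_def field_simps)
    finally show ?thesis .
  qed
  then show "\<exists>x\<in>S. \<forall>i. \<bar>0 $ i - x $ i\<bar> < e" using assms[OF t] by force
qed

lemma qclosure_separates_iff:
  assumes "0 \<in> qclosure C"
  shows "qclosure C \<subseteq> lplus l \<and> qclosure C \<inter> lzero l = {0} \<longleftrightarrow>
    (\<forall>y\<in>qclosure C. y \<noteq> 0 \<longrightarrow> qdot l y > 0)"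
  using assms unfolding lplus_def lzero_def by (auto simp: order_le_less)

locale root_sys =
  fixes R :: "(rat ^ 'n) set" and cor :: "rat ^ 'n \<Rightarrow> rat ^ 'n"
  assumes root_system: "root_system R cor"
begin

abbreviation W where "W \<equiv> weyl_group R cor"

lemma finite_roots: "finite R"
  using root_system unfolding root_system_def by blast

lemma zero_not_root: "0 \<notin> R"
  using root_system unfolding root_system_def by blast

lemma roots_span: "\<exists>c. x = (\<Sum>\<alpha>\<in>R. c \<alpha> *s \<alpha>)"
  using root_system unfolding root_system_def by blast

lemma coroot_root: "\<alpha> \<in> R \<Longrightarrow> qdot (cor \<alpha>) \<alpha> = 2"
  using root_system unfolding root_system_def by blast

lemma qrefl_root: "\<alpha> \<in> R \<Longrightarrow> \<beta> \<in> R \<Longrightarrow> qrefl cor \<alpha> \<beta> \<in> R"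
  using root_system unfolding root_system_def by blast

lemma qrefl_self: "\<alpha> \<in> R \<Longrightarrow> qrefl cor \<alpha> \<alpha> = - \<alpha>"
  unfolding qrefl_def using coroot_root[of \<alpha>] by (simp add: vec_eq_iff)

lemma uminus_root: "\<alpha> \<in> R \<Longrightarrow> - \<alpha> \<in> R"
  using qrefl_root[of \<alpha> \<alpha>] qrefl_self by simp

lemma qrefl_involution: "\<alpha> \<in> R \<Longrightarrow> qrefl cor \<alpha> (qrefl cor \<alpha> x) = x"
  unfolding qrefl_def using coroot_root[of \<alpha>]
  by (simp add: qdot_diff_right qdot_scale_right vec_eq_iff algebra_simps)

lemma qrefl_in_weyl_group: "\<alpha> \<in> R \<Longrightarrow> qrefl cor \<alpha> \<in> W"
  using weyl_group.refl[OF weyl_group.id, of \<alpha> R cor] by simp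

lemma weyl_add: "w \<in> W \<Longrightarrow> w (x + y) = w x + w y"
  by (induction w rule: weyl_group.induct)
    (auto simp: qrefl_def qdot_add_right vector_sadd_rdistrib)

lemma weyl_scale: "w \<in> W \<Longrightarrow> w (c *s x) = c *s w x"
  by (induction w rule: weyl_group.induct)
    (auto simp: qrefl_def qdot_scale_right vector_ssub_ldistrib vector_smult_assoc)

lemma weyl_sum: "w \<in> W \<Longrightarrow> w (sum f A) = (\<Sum>a\<in>A. w (f a))"
  by (induction A rule: infinite_finite_induct)
    (auto simp: weyl_add weyl_scale[of w 0 0, simplified])

lemma weyl_root: "w \<in> W \<Longrightarrow> \<alpha> \<in> R \<Longrightarrow> w \<alpha> \<in> R"
  by (induction w rule: weyl_group.induct) (auto simp: qrefl_root)

lemma weyl_bij: "w \<in> W \<Longrightarrow> bij w"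
proof (induction w rule: weyl_group.induct)
  case (refl w \<alpha>)
  have "bij (qrefl cor \<alpha>)" using qrefl_involution[OF refl.hyps(2)] by (metis bijI')
  then show ?case using refl.IH by (rule bij_comp[rotated])
qed (rule bij_id)

lemma weyl_comp: "w \<in> W \<Longrightarrow> v \<in> W \<Longrightarrow> w \<circ> v \<in> W"
proof (induction w rule: weyl_group.induct)
  case (refl w \<alpha>)
  then have "qrefl cor \<alpha> \<circ> (w \<circ> v) \<in> W" by (blast intro: weyl_group.refl)
  then show ?case by (simp only: comp_assoc)
qed simp

lemma weyl_image_roots: "w \<in> W \<Longrightarrow> w ` R = R"
  using endo_inj_surj[OF finite_roots, of w] weyl_root weyl_bij
  by (metis bij_is_inj image_subsetI inj_on_subset subset_UNIV)

lemma finite_weyl_group: "finite W"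
proof -
  \<comment> \<open>An element of W is determined by its action on the spanning set R.\<close>
  have "inj_on (\<lambda>w. restrict w R) W"
  proof
    fix w v assume "w \<in> W" "v \<in> W" and eq: "restrict w R = restrict v R"
    show "w = v"
    proof
      fix x
      obtain c where x: "x = (\<Sum>\<alpha>\<in>R. c \<alpha> *s \<alpha>)" using roots_span by blast
      have "w \<alpha> = v \<alpha>" if "\<alpha> \<in> R" for \<alpha> using eq that by (metis restrict_apply')
      then show "w x = v x" unfolding x using \<open>w \<in> W\<close> \<open>v \<in> W\<close> by (simp add: weyl_sum weyl_scale)
    qed
  qed
  moreover have "(\<lambda>w. restrict w R) ` W \<subseteq> R \<rightarrow>\<^sub>E R" using weyl_root by auto
  ultimately show ?thesis
    using finite_roots by (meson finite_PiE finite_imageD finite_subset)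
qed

definition inv_form :: "rat ^ 'n \<Rightarrow> rat ^ 'n \<Rightarrow> rat" where
  "inv_form x y = (\<Sum>w\<in>W. qdot (w x) (w y))"

lemma inv_form_commute: "inv_form x y = inv_form y x"
  unfolding inv_form_def by (simp add: qdot_commute)

lemma inv_form_add_right: "inv_form z (x + y) = inv_form z x + inv_form z y"
  unfolding inv_form_def by (simp add: weyl_add qdot_add_right sum.distrib)

lemma inv_form_scale_right: "inv_form z (c *s x) = c * inv_form z x"
  unfolding inv_form_def by (simp add: weyl_scale qdot_scale_right sum_distrib_left)

lemma inv_form_diff_right: "inv_form z (x - y) = inv_form z x - inv_form z y"
  using inv_form_add_right[of z y "x - y"] by simp

lemma inv_form_zero_right [simp]: "inv_form z 0 = 0"
  using inv_form_scale_right[of z 0 0] by simp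

lemma inv_form_minus_right: "inv_form z (- x) = - inv_form z x"
  using inv_form_scale_right[of z "-1" x] by (simp flip: vector_sneg_minus1)

lemma inv_form_sum_right: "inv_form z (sum f A) = (\<Sum>a\<in>A. inv_form z (f a))"
  by (induction A rule: infinite_finite_induct)
    (auto simp: inv_form_add_right inv_form_scale_right[of z 0 0, simplified])

lemma inv_form_zero_left [simp]: "inv_form 0 z = 0"
  by (simp add: inv_form_commute[of 0])

lemma inv_form_add_left: "inv_form (x + y) z = inv_form x z + inv_form y z"
  and inv_form_scale_left: "inv_form (c *s x) z = c * inv_form x z"
  and inv_form_sum_left: "inv_form (sum f A) z = (\<Sum>a\<in>A. inv_form (f a) z)"
  and inv_form_diff_left: "inv_form (x - y) z = inv_form x z - inv_form y z"
  by (simp_all add: inv_form_commute[of _ z] inv_form_add_right inv_form_scale_right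
      inv_form_diff_right inv_form_sum_right)

lemma inv_form_pos: "x \<noteq> 0 \<Longrightarrow> inv_form x x > 0"
  unfolding inv_form_def
  by (intro sum_pos2[OF finite_weyl_group weyl_group.id]) (auto simp: qdot_self_pos qdot_self_nonneg)

lemma inv_form_weyl:
  assumes "u \<in> W"
  shows "inv_form (u x) (u y) = inv_form x y"
proof -
  have inj: "inj_on (\<lambda>w. w \<circ> u) W"
  proof
    fix w v assume "w \<circ> u = v \<circ> u"
    then show "w = v" using weyl_bij[OF assms] by (metis bij_pointE comp_apply ext)
  qed
  have "(\<lambda>w. w \<circ> u) ` W = W"
    using assms by (intro endo_inj_surj[OF finite_weyl_group _ inj]) (auto intro: weyl_comp)
  have "inv_form (u x) (u y) = (\<Sum>w\<in>W. (\<lambda>w. qdot (w x) (w y)) (w \<circ> u))"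
    unfolding inv_form_def by simp
  also have "\<dots> = (\<Sum>w\<in>(\<lambda>w. w \<circ> u) ` W. qdot (w x) (w y))"
    by (simp add: sum.reindex[OF inj])
  also have "\<dots> = inv_form x y"
    unfolding \<open>(\<lambda>w. w \<circ> u) ` W = W\<close> inv_form_def ..
  finally show ?thesis .
qed

lemma inv_form_root_pos: "\<alpha> \<in> R \<Longrightarrow> inv_form \<alpha> \<alpha> > 0"
  by (metis inv_form_pos zero_not_root)

lemma coroot_inv_form:
  assumes "\<alpha> \<in> R"
  shows "qdot (cor \<alpha>) x = 2 * inv_form \<alpha> x / inv_form \<alpha> \<alpha>"
proof -
  have "inv_form (qrefl cor \<alpha> x) (qrefl cor \<alpha> \<alpha>) = inv_form x \<alpha>"
    by (rule inv_form_weyl[OF qrefl_in_weyl_group[OF assms]])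
  then have "inv_form (x - qdot (cor \<alpha>) x *s \<alpha>) (- \<alpha>) = inv_form x \<alpha>"
    by (simp only: qrefl_self[OF assms]) (simp add: qrefl_def)
  then have "qdot (cor \<alpha>) x * inv_form \<alpha> \<alpha> = 2 * inv_form \<alpha> x"
    by (simp add: inv_form_minus_right inv_form_diff_left inv_form_scale_left inv_form_commute[of x])
  then show ?thesis using inv_form_root_pos[OF assms] by (simp add: eq_divide_eq)
qed

lemma coroot_pos_iff: "\<alpha> \<in> R \<Longrightarrow> qdot (cor \<alpha>) x > 0 \<longleftrightarrow> inv_form \<alpha> x > 0"
  using inv_form_root_pos[of \<alpha>] by (simp add: coroot_inv_form zero_less_divide_iff)

lemma coroot_nonneg_iff: "\<alpha> \<in> R \<Longrightarrow> qdot (cor \<alpha>) x \<ge> 0 \<longleftrightarrow> inv_form \<alpha> x \<ge> 0"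
  using inv_form_root_pos[of \<alpha>] by (simp add: coroot_inv_form zero_le_divide_iff)

lemma coroot_eq_0_iff: "\<alpha> \<in> R \<Longrightarrow> qdot (cor \<alpha>) x = 0 \<longleftrightarrow> inv_form \<alpha> x = 0"
  using inv_form_root_pos[of \<alpha>] by (simp add: coroot_inv_form)

definition regular :: "rat ^ 'n \<Rightarrow> bool" where
  "regular x \<longleftrightarrow> (\<forall>\<alpha>\<in>R. qdot (cor \<alpha>) x \<noteq> 0)"

definition chamber_of :: "rat ^ 'n \<Rightarrow> (rat ^ 'n) set" where
  "chamber_of z = {y. \<forall>\<alpha>\<in>R. qdot (cor \<alpha>) y * qdot (cor \<alpha>) z > 0}"

lemma weyl_chamber_iff: "weyl_chamber R cor C \<longleftrightarrow> (\<exists>z. regular z \<and> C = chamber_of z)"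
  unfolding weyl_chamber_def regular_def chamber_of_def ..

lemma ex_regular: "\<exists>x. regular x"
proof -
  have "0 \<notin> cor ` R"
    using coroot_root by (metis imageE qdot_commute qdot_zero_right zero_neq_numeral)
  then show ?thesis
    unfolding regular_def using ex_not_orthogonal[of "cor ` R"] finite_roots by auto
qed

lemma regular_weyl:
  assumes "w \<in> W" and "regular x"
  shows "regular (w x)"
  unfolding regular_def
proof
  fix \<alpha> assume "\<alpha> \<in> R"
  then obtain \<beta> where "\<beta> \<in> R" and "\<alpha> = w \<beta>" using weyl_image_roots[OF assms(1)] by blast
  then show "qdot (cor \<alpha>) (w x) \<noteq> 0"
    using assms(2) inv_form_weyl[OF assms(1)] weyl_root[OF assms(1)]
    by (simp add: regular_def coroot_eq_0_iff)
qed

lemma self_in_chamber_of: "regular z \<Longrightarrow> t > 0 \<Longrightarrow> t *s z \<in> chamber_of z"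
  unfolding regular_def chamber_of_def
  by (auto simp: qdot_scale_right zero_less_mult_iff linorder_neq_iff mult_pos_neg)

lemma zero_in_closure_chamber_of: "regular z \<Longrightarrow> 0 \<in> qclosure (chamber_of z)"
  by (rule zero_in_qclosure) (rule self_in_chamber_of)

lemma closure_chamber_of_sign:
  assumes "y \<in> qclosure (chamber_of z)" and "\<alpha> \<in> R"
  shows "qdot (cor \<alpha>) y * qdot (cor \<alpha>) z \<ge> 0"
proof -
  have "\<forall>x\<in>chamber_of z. qdot (qdot (cor \<alpha>) z *s cor \<alpha>) x > 0"
    using assms(2) by (simp add: chamber_of_def qdot_scale_left mult.commute)
  from qclosure_halfspace[OF this assms(1)] show ?thesis
    by (simp add: qdot_scale_left mult.commute)
qed

lemma weyl_chamber_closure: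
  assumes "weyl_chamber R cor C" and "R \<noteq> {}"
  shows "0 \<in> qclosure C" and "\<exists>p\<in>qclosure C. p \<noteq> 0"
proof -
  obtain z where z: "regular z" "C = chamber_of z" using assms(1) weyl_chamber_iff by blast
  show "0 \<in> qclosure C" using zero_in_closure_chamber_of z by simp
  have "z \<noteq> 0" using z(1) assms(2) by (auto simp: regular_def)
  moreover have "z \<in> qclosure C"
    using self_in_chamber_of[OF z(1), of 1] subset_qclosure z(2) by auto
  ultimately show "\<exists>p\<in>qclosure C. p \<noteq> 0" by blast
qed

lemma separating_seq_length:
  assumes "R \<noteq> {}" and "separating_seq R cor Cs"
  shows "CARD('n) < length Cs"
proof (rule ccontr)
  assume "\<not> CARD('n) < length Cs"
  have chambers: "\<And>C. C \<in> set Cs \<Longrightarrow> weyl_chamber R cor C"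
    using assms(2) unfolding separating_seq_def by blast
  obtain p where p: "\<And>C. C \<in> set Cs \<Longrightarrow> p C \<in> qclosure C \<and> p C \<noteq> 0"
    using weyl_chamber_closure(2)[OF chambers assms(1)] by metis
  have "card (p ` set (tl Cs)) < CARD('n)"
    using card_image_le[of "set (tl Cs)" p] card_length[of "tl Cs"] \<open>\<not> CARD('n) < length Cs\<close>
    by (cases Cs) auto
  then obtain l0 where l0: "l0 \<noteq> 0" "\<forall>x\<in>p ` set (tl Cs). qdot x l0 = 0"
    using ex_orthogonal_nonzero[of "p ` set (tl Cs)"] by auto
  define l where "l = (if qdot l0 (p (hd Cs)) > 0 then - l0 else l0)"
  have "l \<noteq> 0" using l0(1) by (simp add: l_def)
  have "qdot l (p C) \<le> 0" if "C \<in> set Cs" for C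
  proof (cases "C = hd Cs")
    case False
    then have "C \<in> set (tl Cs)" using that by (cases Cs) auto
    then show ?thesis using l0(2) by (simp add: l_def qdot_minus_left qdot_commute)
  qed (simp add: l_def qdot_minus_left)
  moreover obtain C where "C \<in> set Cs" "qclosure C \<subseteq> lplus l" "qclosure C \<inter> lzero l = {0}"
    using assms(2) \<open>l \<noteq> 0\<close> unfolding separating_seq_def by blast
  ultimately show False
    using qclosure_separates_iff[OF weyl_chamber_closure(1)[OF chambers assms(1)]] p by fastforce
qed

lemma ex_weyl_max:
  "\<exists>w\<in>W. \<forall>\<alpha>\<in>R. inv_form \<alpha> (w x) > 0 \<longrightarrow> qdot l \<alpha> \<ge> 0"
proof -
  let ?F = "(\<lambda>v. qdot l (v x)) ` W"
  have "finite ?F" using finite_weyl_group by simp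
  moreover have "?F \<noteq> {}" using weyl_group.id by blast
  ultimately have "Max ?F \<in> ?F" by (rule Max_in)
  then obtain w where "Max ?F = qdot l (w x)" and w: "w \<in> W" by (rule imageE)
  then have max: "qdot l (v x) \<le> qdot l (w x)" if "v \<in> W" for v
    using Max_ge[OF \<open>finite ?F\<close>] that by simp
  \<comment> \<open>Reflecting w x in \<alpha> subtracts a positive multiple of \<alpha>, so it cannot increase l.\<close>
  have "qdot l \<alpha> \<ge> 0" if "\<alpha> \<in> R" "inv_form \<alpha> (w x) > 0" for \<alpha>
  proof -
    have "qdot l (qrefl cor \<alpha> (w x)) \<le> qdot l (w x)"
      using max[OF weyl_group.refl[OF w that(1)]] by simp
    then have "qdot (cor \<alpha>) (w x) * qdot l \<alpha> \<ge> 0"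
      by (simp add: qrefl_def qdot_diff_right qdot_scale_right)
    moreover have "qdot (cor \<alpha>) (w x) > 0" using coroot_pos_iff that by blast
    ultimately show ?thesis by (simp add: zero_le_mult_iff)
  qed
  then show ?thesis using w by blast
qed

lemma inv_form_span_orthogonal:
  assumes "\<forall>x\<in>I. \<forall>y\<in>J. inv_form x y = 0" and "u \<in> vec.span I" and "v \<in> vec.span J"
  shows "inv_form u v = 0"
proof -
  have u: "inv_form u y = 0" if "y \<in> J" for y
    using assms(2) by (induction rule: vec.span_induct_alt)
      (simp_all add: inv_form_add_left inv_form_scale_left assms(1) that)
  from assms(3) show ?thesis
    by (induction rule: vec.span_induct_alt) (simp_all add: inv_form_add_right inv_form_scale_right u)
qed

lemma inv_form_qrefl_self: "\<alpha> \<in> R \<Longrightarrow> inv_form \<alpha> (qrefl cor \<alpha> x) = - inv_form \<alpha> x"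
  using inv_form_weyl[OF qrefl_in_weyl_group, of \<alpha> \<alpha> x]
  by (simp add: qrefl_self inv_form_commute[of "- \<alpha>"] inv_form_commute[of "qrefl cor \<alpha> x"] inv_form_minus_right)

end

definition nonneg_comb :: "(rat ^ 'n) set \<Rightarrow> rat ^ 'n \<Rightarrow> bool" where
  "nonneg_comb X v \<longleftrightarrow> (\<exists>k. (\<forall>x\<in>X. k x \<ge> 0) \<and> v = (\<Sum>x\<in>X. k x *s x))"

lemma nonneg_comb_remove:
  assumes "finite X" and "\<delta> \<in> X" and "nonneg_comb (X - {\<delta>}) \<delta>" and "nonneg_comb X v"
  shows "nonneg_comb (X - {\<delta>}) v"
proof -
  obtain m where m: "\<forall>x\<in>X - {\<delta>}. m x \<ge> 0" "\<delta> = (\<Sum>x\<in>X - {\<delta>}. m x *s x)"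
    using assms(3) unfolding nonneg_comb_def by blast
  obtain k where k: "\<forall>x\<in>X. k x \<ge> 0" "v = (\<Sum>x\<in>X. k x *s x)"
    using assms(4) unfolding nonneg_comb_def by blast
  have "v = k \<delta> *s \<delta> + (\<Sum>x\<in>X - {\<delta>}. k x *s x)"
    using k(2) sum.remove[OF assms(1,2)] by simp
  also have "k \<delta> *s \<delta> = k \<delta> *s (\<Sum>x\<in>X - {\<delta>}. m x *s x)"
    using m(2) by (rule arg_cong)
  also have "\<dots> + (\<Sum>x\<in>X - {\<delta>}. k x *s x) = (\<Sum>x\<in>X - {\<delta>}. (k x + k \<delta> * m x) *s x)"
    by (simp add: vec.scale_sum_right vector_sadd_rdistrib sum.distrib add.commute)
  finally have "v = (\<Sum>x\<in>X - {\<delta>}. (k x + k \<delta> * m x) *s x)" .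
  moreover have "\<forall>x\<in>X - {\<delta>}. k x + k \<delta> * m x \<ge> 0"
    using k(1) m(1) assms(2) by simp
  ultimately show ?thesis
    unfolding nonneg_comb_def by (intro exI[of _ "\<lambda>x. k x + k \<delta> * m x"]) simp
qed

lemma comb_in_span: "(\<Sum>x\<in>X. k x *s x) \<in> vec.span X"
  by (rule vec.span_sum) (rule vec.span_scale, rule vec.span_base)

lemma nonneg_comb_in_span: "nonneg_comb X v \<Longrightarrow> v \<in> vec.span X"
  unfolding nonneg_comb_def using comb_in_span by fastforce

lemma sum_split_sign:
  assumes "finite D"
  shows "(\<Sum>x\<in>D. c x *s x) =
    (\<Sum>x\<in>{x\<in>D. c x > 0}. c x *s x) - (\<Sum>x\<in>{x\<in>D. c x < 0}. (- c x) *s (x :: rat ^ 'n))"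
proof -
  have "(\<Sum>x\<in>D. c x *s x) =
      (\<Sum>x\<in>D. (if c x > 0 then c x *s x else 0) - (if c x < 0 then (- c x) *s x else 0))"
    by (intro sum.cong) (auto simp: vec_eq_iff)
  then show ?thesis unfolding sum.inter_filter[OF assms] sum_subtractf .
qed

locale positive_system = root_sys R cor for R :: "(rat ^ 'n) set" and cor +
  fixes z :: "rat ^ 'n"
  assumes regular_z: "regular z"
begin

text \<open>The linear function inv_form \<cdot> z serves as the height of a root.\<close>
definition pos_roots :: "(rat ^ 'n) set" where
  "pos_roots = {\<alpha>\<in>R. inv_form \<alpha> z > 0}"

definition pos_generating :: "(rat ^ 'n) set \<Rightarrow> bool" where
  "pos_generating X \<longleftrightarrow> X \<subseteq> pos_roots \<and> (\<forall>\<alpha>\<in>pos_roots. nonneg_comb X \<alpha>)"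

definition simple_roots :: "(rat ^ 'n) set" where
  "simple_roots = (ARG_MIN card X. pos_generating X)"

lemma pos_subset_roots: "pos_roots \<subseteq> R"
  unfolding pos_roots_def by auto

lemma finite_pos_roots: "finite pos_roots"
  using finite_subset[OF pos_subset_roots finite_roots] .

lemma root_in_pos_roots_or_uminus: "\<alpha> \<in> R \<Longrightarrow> \<alpha> \<in> pos_roots \<or> - \<alpha> \<in> pos_roots"
  using regular_z uminus_root[of \<alpha>] coroot_eq_0_iff[of \<alpha> z]
  unfolding pos_roots_def regular_def by (auto simp: inv_form_commute[of "- \<alpha>"] inv_form_minus_right
      inv_form_commute[of \<alpha>])

lemma pos_generating_pos: "pos_generating pos_roots"
  unfolding pos_generating_def nonneg_comb_def
proof (intro conjI ballI subset_refl)
  fix \<alpha> assume "\<alpha> \<in> pos_roots"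
  then have "\<alpha> = (\<Sum>x\<in>pos_roots. (if x = \<alpha> then 1 else 0) *s x)"
    by (simp add: if_distrib[of "\<lambda>c. c *s _"] sum.delta' finite_pos_roots cong: if_cong)
  then show "\<exists>k. (\<forall>x\<in>pos_roots. 0 \<le> k x) \<and> \<alpha> = (\<Sum>x\<in>pos_roots. k x *s x)"
    by (intro exI[of _ "\<lambda>x. if x = \<alpha> then 1 else 0"]) simp
qed

lemma simple_generating: "pos_generating simple_roots"
  unfolding simple_roots_def by (rule arg_min_natI) (rule pos_generating_pos)

lemma card_simple_le: "pos_generating X \<Longrightarrow> card simple_roots \<le> card X"
  unfolding simple_roots_def by (rule arg_min_nat_le)

lemma simple_subset_pos: "simple_roots \<subseteq> pos_roots"
  using simple_generating unfolding pos_generating_def by blast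

lemma finite_simple_roots: "finite simple_roots"
  using finite_subset[OF simple_subset_pos finite_pos_roots] .

lemma simple_root: "\<gamma> \<in> simple_roots \<Longrightarrow> \<gamma> \<in> R"
  using simple_subset_pos pos_subset_roots by blast

lemma simple_height_pos: "\<gamma> \<in> simple_roots \<Longrightarrow> inv_form \<gamma> z > 0"
  using simple_subset_pos unfolding pos_roots_def by blast

lemma pos_nonneg_comb: "\<alpha> \<in> pos_roots \<Longrightarrow> nonneg_comb simple_roots \<alpha>"
  using simple_generating unfolding pos_generating_def by blast

lemma simple_not_nonneg_comb_others:
  assumes "\<delta> \<in> simple_roots"
  shows "\<not> nonneg_comb (simple_roots - {\<delta>}) \<delta>"
proof
  assume "nonneg_comb (simple_roots - {\<delta>}) \<delta>"
  then have "pos_generating (simple_roots - {\<delta>})"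
    using simple_generating nonneg_comb_remove[OF finite_simple_roots assms]
    unfolding pos_generating_def by blast
  then have "card simple_roots \<le> card (simple_roots - {\<delta>})" by (rule card_simple_le)
  then show False using card_Diff1_less[OF finite_simple_roots assms] by simp
qed

lemma simple_comb_height_nonpos:
  assumes "A \<subseteq> simple_roots" and "\<forall>x\<in>A. a x \<ge> 0" and "inv_form (\<Sum>x\<in>A. a x *s x) z \<le> 0"
  shows "\<forall>x\<in>A. a x = 0"
proof -
  have "finite A" using finite_subset[OF assms(1) finite_simple_roots] .
  have nonneg: "\<forall>x\<in>A. a x * inv_form x z \<ge> 0"
  proof
    fix x assume "x \<in> A"
    then show "a x * inv_form x z \<ge> 0"
      using assms(1,2) simple_height_pos[of x] by (auto simp: zero_le_mult_iff)
  qed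
  then have "(\<Sum>x\<in>A. a x * inv_form x z) = 0"
    using assms(3) sum_nonneg[of A "\<lambda>x. a x * inv_form x z"]
    by (simp add: inv_form_sum_left inv_form_scale_left)
  then have "\<forall>x\<in>A. a x * inv_form x z = 0"
    using sum_nonneg_eq_0_iff[OF \<open>finite A\<close>, of "\<lambda>x. a x * inv_form x z"] nonneg by simp
  then show ?thesis using assms(1) simple_height_pos by (metis less_irrefl mult_eq_0_iff subsetD)
qed

lemma simple_nonneg_relation:
  assumes "\<delta> \<in> simple_roots" and "\<forall>x\<in>simple_roots - {\<delta>}. a x \<ge> 0"
    and "p *s \<delta> = (\<Sum>x\<in>simple_roots - {\<delta>}. a x *s x)"
  shows "\<forall>x\<in>simple_roots - {\<delta>}. a x = 0"
proof (cases "p > 0")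
  case True
  have "\<delta> = (\<Sum>x\<in>simple_roots - {\<delta>}. (a x / p) *s x)"
    using arg_cong[OF assms(3), of "\<lambda>v. (1 / p) *s v"] True
    by (simp add: vec.scale_sum_right vector_smult_assoc)
  then have "nonneg_comb (simple_roots - {\<delta>}) \<delta>"
    unfolding nonneg_comb_def using assms(2) True by (intro exI[of _ "\<lambda>x. a x / p"]) simp
  then show ?thesis using simple_not_nonneg_comb_others[OF assms(1)] by contradiction
next
  case False
  then have "inv_form (\<Sum>x\<in>simple_roots - {\<delta>}. a x *s x) z \<le> 0"
    using simple_height_pos[OF assms(1)]
    by (simp flip: assms(3) add: inv_form_scale_left mult_nonpos_nonneg)
  then show ?thesis by (intro simple_comb_height_nonpos[OF _ assms(2)]) auto
qed

lemma simple_diff_not_nonneg_comb: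
  assumes "\<gamma> \<in> simple_roots" and "\<delta> \<in> simple_roots" and "\<gamma> \<noteq> \<delta>" and "b > 0"
  shows "\<not> nonneg_comb simple_roots (a *s \<gamma> - b *s \<delta>)"
proof
  assume "nonneg_comb simple_roots (a *s \<gamma> - b *s \<delta>)"
  then obtain k where k: "\<forall>x\<in>simple_roots. k x \<ge> 0" "a *s \<gamma> - b *s \<delta> = (\<Sum>x\<in>simple_roots. k x *s x)"
    unfolding nonneg_comb_def by blast
  let ?k' = "\<lambda>x. k x + (if x = \<delta> then b else 0)"
  have "\<delta> \<in> simple_roots - {\<gamma>}" using assms by simp
  have "(a - k \<gamma>) *s \<gamma> = (\<Sum>x\<in>simple_roots - {\<gamma>}. k x *s x) + b *s \<delta>"
    using k(2) sum.remove[OF finite_simple_roots assms(1), of "\<lambda>x. k x *s x"]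
    by (simp add: vec_eq_iff algebra_simps)
  also have "\<dots> = (\<Sum>x\<in>simple_roots - {\<gamma>}. ?k' x *s x)"
    using \<open>\<delta> \<in> simple_roots - {\<gamma>}\<close> finite_simple_roots
    by (simp add: vector_sadd_rdistrib sum.distrib if_distrib[of "\<lambda>c. c *s _"] sum.delta' cong: if_cong)
  finally have eq: "(a - k \<gamma>) *s \<gamma> = (\<Sum>x\<in>simple_roots - {\<gamma>}. ?k' x *s x)" .
  have "\<forall>x\<in>simple_roots - {\<gamma>}. ?k' x \<ge> 0" using k(1) assms(4) by simp
  from simple_nonneg_relation[OF assms(1) this eq] \<open>\<delta> \<in> simple_roots - {\<gamma>}\<close>
  have "?k' \<delta> = 0" by (rule bspec)
  then have "k \<delta> + b = 0" by simp
  moreover have "k \<delta> \<ge> 0" using k(1) assms(2) by simp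
  ultimately show False using assms(4) by linarith
qed

text \<open>Otherwise the reflection \<delta> - c \<gamma> (c > 0) of \<delta> in \<gamma> would be a root that is neither
  positive nor negative.\<close>
lemma simple_inv_form_nonpos:
  assumes "\<gamma> \<in> simple_roots" and "\<delta> \<in> simple_roots" and "\<gamma> \<noteq> \<delta>"
  shows "inv_form \<gamma> \<delta> \<le> 0"
proof (rule ccontr)
  assume "\<not> inv_form \<gamma> \<delta> \<le> 0"
  define c where "c = qdot (cor \<gamma>) \<delta>"
  have "c > 0"
    using \<open>\<not> inv_form \<gamma> \<delta> \<le> 0\<close> coroot_pos_iff[OF simple_root[OF assms(1)]] by (simp add: c_def)
  have "1 *s \<delta> - c *s \<gamma> \<in> R"
    using qrefl_root[OF simple_root[OF assms(1)] simple_root[OF assms(2)]] by (simp add: qrefl_def c_def)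
  then consider "1 *s \<delta> - c *s \<gamma> \<in> pos_roots" | "c *s \<gamma> - 1 *s \<delta> \<in> pos_roots"
    using root_in_pos_roots_or_uminus by fastforce
  then show False
  proof cases
    case 1
    then have "nonneg_comb simple_roots (1 *s \<delta> - c *s \<gamma>)" by (rule pos_nonneg_comb)
    with simple_diff_not_nonneg_comb[OF assms(2,1) assms(3)[symmetric] \<open>c > 0\<close>] show False ..
  next
    case 2
    then have "nonneg_comb simple_roots (c *s \<gamma> - 1 *s \<delta>)" by (rule pos_nonneg_comb)
    with simple_diff_not_nonneg_comb[OF assms, of 1 c] show False by simp
  qed
qed

lemma inv_form_disjoint_combs_nonpos:
  assumes "A \<subseteq> simple_roots" and "B \<subseteq> simple_roots" and "A \<inter> B = {}"
    and "\<forall>x\<in>A. a x \<ge> 0" and "\<forall>y\<in>B. b y \<ge> 0"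
  shows "inv_form (\<Sum>x\<in>A. a x *s x) (\<Sum>y\<in>B. b y *s y) \<le> 0"
proof -
  have "inv_form (\<Sum>x\<in>A. a x *s x) (\<Sum>y\<in>B. b y *s y) = (\<Sum>x\<in>A. \<Sum>y\<in>B. a x * (b y * inv_form x y))"
    unfolding inv_form_sum_left inv_form_scale_left inv_form_sum_right inv_form_scale_right
      sum_distrib_left by (subst sum.swap) (simp add: mult.left_commute)
  also have "\<dots> \<le> 0"
  proof (intro sum_nonpos)
    fix x y assume "x \<in> A" "y \<in> B"
    then have "inv_form x y \<le> 0"
      using assms(1-3) by (intro simple_inv_form_nonpos) auto
    then show "a x * (b y * inv_form x y) \<le> 0"
      using \<open>x \<in> A\<close> \<open>y \<in> B\<close> assms(4,5) by (simp add: mult_nonneg_nonpos)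
  qed
  finally show ?thesis .
qed

lemma simple_independent:
  assumes "(\<Sum>x\<in>simple_roots. c x *s x) = 0"
  shows "\<forall>x\<in>simple_roots. c x = 0"
proof -
  let ?P = "{x\<in>simple_roots. c x > 0}" and ?N = "{x\<in>simple_roots. c x < 0}"
  define u where "u = (\<Sum>x\<in>?P. c x *s x)"
  have u: "u = (\<Sum>x\<in>?N. (- c x) *s x)"
    using assms sum_split_sign[OF finite_simple_roots, of c] by (simp add: u_def)
  have "inv_form u (\<Sum>x\<in>?N. (- c x) *s x) \<le> 0"
    unfolding u_def by (rule inv_form_disjoint_combs_nonpos) auto
  then have "inv_form u u \<le> 0" by (simp only: u[symmetric])
  then have "u = 0" using inv_form_pos[of u] by force
  have "inv_form (\<Sum>x\<in>?P. c x *s x) z \<le> 0" using \<open>u = 0\<close> by (simp add: u_def)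
  from simple_comb_height_nonpos[OF _ _ this] have P: "\<forall>x\<in>?P. c x = 0" by auto
  have "inv_form (\<Sum>x\<in>?N. (- c x) *s x) z \<le> 0" using \<open>u = 0\<close> by (simp only: u) simp
  from simple_comb_height_nonpos[OF _ _ this] have N: "\<forall>x\<in>?N. - c x = 0" by auto
  show ?thesis
  proof
    fix x assume "x \<in> simple_roots"
    then show "c x = 0" using P N by (cases "c x" "0::rat" rule: linorder_cases) auto
  qed
qed

lemma span_simple: "vec.span simple_roots = UNIV"
proof -
  have "\<alpha> \<in> vec.span simple_roots" if "\<alpha> \<in> pos_roots" for \<alpha>
    using pos_nonneg_comb[OF that] by (rule nonneg_comb_in_span)
  then have "\<alpha> \<in> vec.span simple_roots" if "\<alpha> \<in> R" for \<alpha>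
    using root_in_pos_roots_or_uminus[OF that] vec.span_neg by fastforce
  moreover have "x \<in> vec.span R" for x
    using roots_span[of x] comb_in_span by metis
  ultimately show ?thesis
    by (metis UNIV_eq_I subsetI vec.span_minimal vec.subspace_span subsetD)
qed

lemma pos_root_acute_simple:
  assumes "\<alpha> \<in> pos_roots"
  shows "\<exists>\<gamma>\<in>simple_roots. inv_form \<gamma> \<alpha> > 0"
proof -
  obtain k where k: "\<forall>x\<in>simple_roots. k x \<ge> 0" "\<alpha> = (\<Sum>x\<in>simple_roots. k x *s x)"
    using pos_nonneg_comb[OF assms] unfolding nonneg_comb_def by blast
  have "0 < inv_form \<alpha> \<alpha>" using assms pos_subset_roots inv_form_root_pos by blast
  also have "inv_form \<alpha> \<alpha> = (\<Sum>x\<in>simple_roots. k x * inv_form x \<alpha>)"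
    by (subst (1) k(2)) (simp add: inv_form_sum_left inv_form_scale_left)
  finally have "\<exists>\<gamma>\<in>simple_roots. k \<gamma> * inv_form \<gamma> \<alpha> > 0"
    by (meson not_le sum_nonpos)
  then show ?thesis using k(1) by (auto simp: zero_less_mult_iff)
qed

lemma qrefl_simple_pos_root:
  assumes "\<gamma> \<in> simple_roots" and "\<alpha> \<in> pos_roots" and "\<alpha> \<notin> vec.span {\<gamma>}"
  shows "qrefl cor \<gamma> \<alpha> \<in> pos_roots"
proof (rule ccontr)
  assume "qrefl cor \<gamma> \<alpha> \<notin> pos_roots"
  have "\<alpha> \<in> R" using assms(2) pos_subset_roots by blast
  obtain k where k: "\<forall>x\<in>simple_roots. k x \<ge> 0" "\<alpha> = (\<Sum>x\<in>simple_roots. k x *s x)"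
    using pos_nonneg_comb[OF assms(2)] unfolding nonneg_comb_def by blast
  have "\<not> (\<forall>x\<in>simple_roots - {\<gamma>}. k x = 0)"
  proof
    assume "\<forall>x\<in>simple_roots - {\<gamma>}. k x = 0"
    then have "\<alpha> = k \<gamma> *s \<gamma>"
      using k(2) sum.remove[OF finite_simple_roots assms(1), of "\<lambda>x. k x *s x"] by simp
    then show False using assms(3) vec.span_scale vec.span_base by (metis singletonI)
  qed
  then obtain \<delta> where \<delta>: "\<delta> \<in> simple_roots" "\<delta> \<noteq> \<gamma>" "k \<delta> > 0"
    using k(1) by (metis DiffE insertI1 order_le_less)
  define c where "c = qdot (cor \<gamma>) \<alpha>"
  have "- qrefl cor \<gamma> \<alpha> \<in> pos_roots"
    using \<open>qrefl cor \<gamma> \<alpha> \<notin> pos_roots\<close> root_in_pos_roots_or_uminus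
      qrefl_root[OF simple_root[OF assms(1)] \<open>\<alpha> \<in> R\<close>] by blast
  then obtain m where m: "\<forall>x\<in>simple_roots. m x \<ge> 0" "c *s \<gamma> - \<alpha> = (\<Sum>x\<in>simple_roots. m x *s x)"
    using pos_nonneg_comb unfolding nonneg_comb_def by (fastforce simp: qrefl_def c_def)
  \<comment> \<open>Adding the expansions of \<alpha> and of - qrefl cor \<gamma> \<alpha> gives a relation in which \<delta> occurs.\<close>
  have "(\<Sum>x\<in>simple_roots. (k x + m x - (if x = \<gamma> then c else 0)) *s x)
      = (\<Sum>x\<in>simple_roots. k x *s x) + (\<Sum>x\<in>simple_roots. m x *s x) - c *s \<gamma>"
    using assms(1) finite_simple_roots
    by (simp add: vector_sadd_rdistrib vec.scale_left_diff_distrib sum.distrib sum_subtractf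
        if_distrib[of "\<lambda>c. c *s _"] sum.delta' cong: if_cong)
  also have "\<dots> = 0" using k(2) by (simp add: m(2)[symmetric])
  finally have "k \<delta> + m \<delta> = 0" using simple_independent \<delta> by fastforce
  then show False using \<delta> m(1) by (metis add_pos_nonneg less_irrefl)
qed

lemma pos_in_orthogonal_spans:
  assumes "I \<union> J = simple_roots" and orth: "\<forall>x\<in>I. \<forall>y\<in>J. inv_form x y = 0" and "\<alpha> \<in> pos_roots"
  shows "\<alpha> \<in> vec.span I \<or> \<alpha> \<in> vec.span J"
  using \<open>\<alpha> \<in> pos_roots\<close>
proof (induction \<alpha> rule: measure_induct_rule[where
    f = "\<lambda>\<alpha>. card {\<beta>\<in>pos_roots. inv_form \<beta> z < inv_form \<alpha> z}"])
  case (less \<alpha>)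
  have simple_span: "\<gamma> \<in> vec.span I \<or> \<gamma> \<in> vec.span J" if "\<gamma> \<in> simple_roots" for \<gamma>
    using that assms(1) vec.span_base by blast
  obtain \<gamma> where \<gamma>: "\<gamma> \<in> simple_roots" "inv_form \<gamma> \<alpha> > 0"
    using pos_root_acute_simple[OF less.prems] by blast
  show ?case
  proof (cases "\<alpha> \<in> vec.span {\<gamma>}")
    case True
    have "{\<gamma>} \<subseteq> I \<or> {\<gamma>} \<subseteq> J" using \<gamma>(1) assms(1) by auto
    then have "vec.span {\<gamma>} \<subseteq> vec.span I \<or> vec.span {\<gamma>} \<subseteq> vec.span J"
      by (metis vec.span_mono)
    then show ?thesis using True by auto
  next
    case False
    have "qrefl cor \<gamma> \<alpha> \<in> pos_roots" by (rule qrefl_simple_pos_root[OF \<gamma>(1) less.prems False])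
    define \<beta> where "\<beta> = qrefl cor \<gamma> \<alpha>"
    define c where "c = qdot (cor \<gamma>) \<alpha>"
    have "c > 0" using \<gamma> coroot_pos_iff simple_root by (simp add: c_def)
    have \<alpha>: "\<alpha> = \<beta> + c *s \<gamma>" by (simp add: \<beta>_def c_def qrefl_def)
    have "inv_form \<beta> z < inv_form \<alpha> z"
      using \<open>c > 0\<close> simple_height_pos[OF \<gamma>(1)]
      by (simp add: \<alpha> inv_form_add_left inv_form_scale_left)
    then have "card {\<beta>'\<in>pos_roots. inv_form \<beta>' z < inv_form \<beta> z}
        < card {\<beta>'\<in>pos_roots. inv_form \<beta>' z < inv_form \<alpha> z}"
      using \<open>qrefl cor \<gamma> \<alpha> \<in> pos_roots\<close> finite_pos_roots unfolding \<beta>_def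
      by (intro psubset_card_mono) auto
    then have \<beta>_span: "\<beta> \<in> vec.span I \<or> \<beta> \<in> vec.span J"
      using less.IH \<open>qrefl cor \<gamma> \<alpha> \<in> pos_roots\<close> by (simp add: \<beta>_def)
    \<comment> \<open>\<gamma> and \<beta> cannot lie in orthogonal spans, since their pairing is - inv_form \<gamma> \<alpha> < 0.\<close>
    have "inv_form \<gamma> \<beta> \<noteq> 0"
      using \<gamma>(2) inv_form_qrefl_self[OF simple_root[OF \<gamma>(1)]] by (simp add: \<beta>_def)
    moreover have "inv_form \<beta> \<gamma> \<noteq> 0" using calculation inv_form_commute by metis
    ultimately have "\<gamma> \<in> vec.span I \<and> \<beta> \<in> vec.span I \<or> \<gamma> \<in> vec.span J \<and> \<beta> \<in> vec.span J"
      using simple_span[OF \<gamma>(1)] \<beta>_span inv_form_span_orthogonal[OF orth] by metis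
    then show ?thesis using \<alpha> by (metis vec.span_add vec.span_scale)
  qed
qed

lemma simple_connected:
  assumes "irreducible_rs R cor" and "I \<union> J = simple_roots" and orth: "\<forall>x\<in>I. \<forall>y\<in>J. inv_form x y = 0"
  shows "I = {} \<or> J = {}"
proof (rule ccontr)
  assume "\<not> (I = {} \<or> J = {})"
  then obtain \<gamma> \<delta> where "\<gamma> \<in> I" "\<delta> \<in> J" by blast
  have orth': "\<forall>x\<in>J. \<forall>y\<in>I. inv_form x y = 0" using orth inv_form_commute by metis
  have root_span: "\<alpha> \<in> vec.span I \<or> \<alpha> \<in> vec.span J" if "\<alpha> \<in> R" for \<alpha>
    using root_in_pos_roots_or_uminus[OF that] pos_in_orthogonal_spans[OF assms(2,3)] vec.span_neg
    by (metis minus_minus)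
  define R1 where "R1 = {\<alpha>\<in>R. \<alpha> \<in> vec.span I}"
  have "\<gamma> \<in> R1"
    using \<open>\<gamma> \<in> I\<close> assms(2) simple_root vec.span_base by (auto simp: R1_def)
  moreover have "\<delta> \<in> R - R1"
  proof -
    have "\<delta> \<in> R" using \<open>\<delta> \<in> J\<close> assms(2) simple_root by blast
    moreover have "\<delta> \<notin> vec.span I"
      using inv_form_span_orthogonal[OF orth' vec.span_base[OF \<open>\<delta> \<in> J\<close>]]
        inv_form_root_pos[OF \<open>\<delta> \<in> R\<close>]
      by (metis less_irrefl)
    ultimately show ?thesis by (simp add: R1_def)
  qed
  moreover have "qdot (cor \<alpha>) \<beta> = 0" if "\<alpha> \<in> R1" "\<beta> \<in> R - R1" for \<alpha> \<beta>
  proof -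
    have "\<beta> \<in> vec.span J" using that root_span by (auto simp: R1_def)
    then have "inv_form \<alpha> \<beta> = 0" using that(1) inv_form_span_orthogonal[OF orth] by (simp add: R1_def)
    then show ?thesis using that(1) coroot_eq_0_iff by (simp add: R1_def)
  qed
  ultimately have "\<exists>R1 R2. R1 \<noteq> {} \<and> R2 \<noteq> {} \<and> R1 \<union> R2 = R \<and> R1 \<inter> R2 = {} \<and>
      (\<forall>\<alpha>\<in>R1. \<forall>\<beta>\<in>R2. qdot (cor \<alpha>) \<beta> = 0)"
    by (intro exI[of _ R1] exI[of _ "R - R1"]) (auto simp: R1_def)
  then show False using assms(1) unfolding irreducible_rs_def by simp
qed

lemma dominant_nonneg_coeffs:
  assumes "\<forall>\<gamma>\<in>simple_roots. inv_form \<gamma> y \<ge> 0"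
  obtains c where "y = (\<Sum>x\<in>simple_roots. c x *s x)" and "\<forall>x\<in>simple_roots. c x \<ge> 0"
proof -
  obtain c where y: "y = (\<Sum>x\<in>simple_roots. c x *s x)"
    using span_simple vec.span_finite[OF finite_simple_roots] by blast
  let ?P = "{x\<in>simple_roots. c x > 0}" and ?N = "{x\<in>simple_roots. c x < 0}"
  define v where "v = (\<Sum>x\<in>?N. (- c x) *s x)"
  have "y = (\<Sum>x\<in>?P. c x *s x) - v"
    unfolding y v_def by (rule sum_split_sign[OF finite_simple_roots])
  then have "inv_form v v = inv_form (\<Sum>x\<in>?P. c x *s x) v - inv_form y v"
    by (simp add: inv_form_diff_left)
  moreover have "inv_form (\<Sum>x\<in>?P. c x *s x) v \<le> 0"
    unfolding v_def by (rule inv_form_disjoint_combs_nonpos) auto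
  moreover have "inv_form y v \<ge> 0"
    unfolding v_def inv_form_sum_right inv_form_scale_right
    using assms by (intro sum_nonneg mult_nonneg_nonneg) (auto simp: inv_form_commute[of y])
  ultimately have "v = 0" using inv_form_pos[of v] by force
  then have "inv_form (\<Sum>x\<in>?N. (- c x) *s x) z \<le> 0" by (simp add: v_def)
  from simple_comb_height_nonpos[OF _ _ this] have "\<forall>x\<in>simple_roots. c x \<ge> 0"
    by (auto simp: not_less[symmetric])
  then show thesis using that y by blast
qed

text \<open>This is where irreducibility enters: the simple roots outside the support of a dominant
  vector would be orthogonal to those inside.\<close>
lemma dominant_pos_coeffs:
  assumes "irreducible_rs R cor" and "y \<noteq> 0" and dom: "\<forall>\<gamma>\<in>simple_roots. inv_form \<gamma> y \<ge> 0"
  obtains c where "y = (\<Sum>x\<in>simple_roots. c x *s x)" and "\<forall>x\<in>simple_roots. c x > 0"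
proof -
  obtain c where y: "y = (\<Sum>x\<in>simple_roots. c x *s x)" and c: "\<forall>x\<in>simple_roots. c x \<ge> 0"
    using dominant_nonneg_coeffs[OF dom] .
  let ?I = "{x\<in>simple_roots. c x > 0}"
  have no_neg: "{x\<in>simple_roots. c x < 0} = {}" using c by force
  have y_I: "y = (\<Sum>x\<in>?I. c x *s x)"
    using sum_split_sign[OF finite_simple_roots, of c, unfolded no_neg] by (simp add: y)
  have "?I \<noteq> {}" using \<open>y \<noteq> 0\<close> y_I by (metis sum.empty)
  have "inv_form x d = 0" if "x \<in> ?I" "d \<in> simple_roots - ?I" for x d
  proof -
    have nonpos: "c x' * inv_form d x' \<le> 0" if "x' \<in> ?I" for x'
    proof -
      have "d \<noteq> x'" using that \<open>d \<in> simple_roots - ?I\<close> by auto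
      then have "inv_form d x' \<le> 0"
        using simple_inv_form_nonpos that \<open>d \<in> simple_roots - ?I\<close> by simp
      then show ?thesis using that by (simp add: mult_nonneg_nonpos)
    qed
    have "0 \<le> inv_form d y" using dom \<open>d \<in> simple_roots - ?I\<close> by simp
    also have "inv_form d y = (\<Sum>x'\<in>?I. c x' * inv_form d x')"
      by (simp add: y_I inv_form_sum_right inv_form_scale_right)
    finally have "0 \<le> (\<Sum>x'\<in>?I. c x' * inv_form d x')" .
    moreover have "(\<Sum>x'\<in>?I. c x' * inv_form d x') \<le> 0" using nonpos by (rule sum_nonpos)
    ultimately have "(\<Sum>x'\<in>?I. - (c x' * inv_form d x')) = 0" by (simp add: sum_negf)
    then have "\<forall>x'\<in>?I. - (c x' * inv_form d x') = 0"
      using sum_nonneg_eq_0_iff[of ?I "\<lambda>x'. - (c x' * inv_form d x')"] nonpos finite_simple_roots by simp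
    then have "c x * inv_form d x = 0" using that(1) by simp
    then show ?thesis using that(1) by (simp add: inv_form_commute[of x])
  qed
  then have "simple_roots - ?I = {}"
    using simple_connected[OF assms(1), of ?I "simple_roots - ?I"] \<open>?I \<noteq> {}\<close> by auto
  then show thesis using that y by auto
qed

lemma pairing_pos_of_dominant:
  assumes "irreducible_rs R cor" and "l \<noteq> 0" and "\<forall>\<alpha>\<in>pos_roots. qdot l \<alpha> \<ge> 0"
    and "y \<noteq> 0" and "\<forall>\<alpha>\<in>pos_roots. inv_form \<alpha> y \<ge> 0"
  shows "qdot l y > 0"
proof -
  obtain c where y: "y = (\<Sum>x\<in>simple_roots. c x *s x)" and c: "\<forall>x\<in>simple_roots. c x > 0"
    using dominant_pos_coeffs[OF assms(1,4)] assms(5) simple_subset_pos by blast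
  have l_simple: "\<forall>\<gamma>\<in>simple_roots. qdot l \<gamma> \<ge> 0" using assms(3) simple_subset_pos by blast
  \<comment> \<open>l cannot vanish on all simple roots, since they span.\<close>
  have "\<exists>\<gamma>\<in>simple_roots. qdot l \<gamma> > 0"
  proof (rule ccontr)
    assume "\<not> (\<exists>\<gamma>\<in>simple_roots. qdot l \<gamma> > 0)"
    then have "\<forall>\<gamma>\<in>simple_roots. qdot l \<gamma> = 0" using l_simple by force
    moreover obtain d where "l = (\<Sum>x\<in>simple_roots. d x *s x)"
      using span_simple vec.span_finite[OF finite_simple_roots] by blast
    ultimately have "qdot l l = 0" by (simp add: qdot_sum_right qdot_scale_right)
    then show False using \<open>l \<noteq> 0\<close> qdot_self_eq_0 by blast
  qed
  then obtain \<gamma> where "\<gamma> \<in> simple_roots" "qdot l \<gamma> > 0" by blast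
  have "0 < c \<gamma> * qdot l \<gamma>" using c \<open>\<gamma> \<in> simple_roots\<close> \<open>qdot l \<gamma> > 0\<close> by simp
  also have "\<dots> \<le> (\<Sum>x\<in>simple_roots. c x * qdot l x)"
    using c l_simple \<open>\<gamma> \<in> simple_roots\<close> finite_simple_roots by (intro member_le_sum) (auto intro: less_imp_le)
  also have "\<dots> = qdot l y" by (simp add: y qdot_sum_right qdot_scale_right)
  finally show ?thesis .
qed

end

context root_sys
begin

lemma ex_separating_chamber:
  assumes "irreducible_rs R cor" and "regular x" and "l \<noteq> 0"
  obtains w where "w \<in> W"
    and "qclosure (chamber_of (w x)) \<subseteq> lplus l" "qclosure (chamber_of (w x)) \<inter> lzero l = {0}"
proof -
  obtain w where "w \<in> W" and max: "\<forall>\<alpha>\<in>R. inv_form \<alpha> (w x) > 0 \<longrightarrow> qdot l \<alpha> \<ge> 0"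
    using ex_weyl_max by blast
  then interpret positive_system R cor "w x"
    by unfold_locales (rule regular_weyl[OF _ assms(2)])
  have "qdot l y > 0" if "y \<in> qclosure (chamber_of (w x))" "y \<noteq> 0" for y
  proof (rule pairing_pos_of_dominant[OF assms(1,3) _ \<open>y \<noteq> 0\<close>])
    show "\<forall>\<alpha>\<in>pos_roots. qdot l \<alpha> \<ge> 0" using max by (simp add: pos_roots_def)
    show "\<forall>\<alpha>\<in>pos_roots. inv_form \<alpha> y \<ge> 0"
    proof
      fix \<alpha> assume "\<alpha> \<in> pos_roots"
      then have "\<alpha> \<in> R" and "qdot (cor \<alpha>) (w x) > 0" using coroot_pos_iff by (auto simp: pos_roots_def)
      moreover have "qdot (cor \<alpha>) y * qdot (cor \<alpha>) (w x) \<ge> 0"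
        using closure_chamber_of_sign[OF that(1) \<open>\<alpha> \<in> R\<close>] .
      ultimately show "inv_form \<alpha> y \<ge> 0" by (simp add: coroot_nonneg_iff[symmetric] zero_le_mult_iff)
    qed
  qed
  then show thesis
    using that[OF \<open>w \<in> W\<close>] qclosure_separates_iff[OF zero_in_closure_chamber_of[OF regular_z]] by blast
qed

lemma ex_separating_seq_card_weyl_group:
  assumes "irreducible_rs R cor"
  shows "\<exists>Cs. length Cs = card W \<and> separating_seq R cor Cs"
proof -
  obtain x where "regular x" using ex_regular by blast
  obtain ws where ws: "set ws = W" "distinct ws" using finite_distinct_list[OF finite_weyl_group] by blast
  define Cs where "Cs = map (\<lambda>w. chamber_of (w x)) ws"
  have "separating_seq R cor Cs"
    unfolding separating_seq_def
  proof (intro conjI allI impI ballI)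
    fix C assume "C \<in> set Cs"
    then obtain w where "w \<in> set ws" and C: "C = chamber_of (w x)" unfolding Cs_def by auto
    then have "regular (w x)" using ws(1) regular_weyl[OF _ \<open>regular x\<close>] by simp
    then show "weyl_chamber R cor C" unfolding weyl_chamber_iff C by blast
  next
    fix l :: "rat ^ 'n" assume "l \<noteq> 0"
    then obtain w where "w \<in> W" and "qclosure (chamber_of (w x)) \<subseteq> lplus l"
      and "qclosure (chamber_of (w x)) \<inter> lzero l = {0}"
      by (rule ex_separating_chamber[OF assms \<open>regular x\<close>])
    moreover have "chamber_of (w x) \<in> set Cs"
      unfolding Cs_def set_map ws(1) using \<open>w \<in> W\<close> by (rule imageI)
    ultimately show "\<exists>C\<in>set Cs. qclosure C \<subseteq> lplus l \<and> qclosure C \<inter> lzero l = {0}" by blast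
  qed
  moreover have "length Cs = card W" using distinct_card[OF ws(2)] by (simp add: Cs_def ws(1))
  ultimately show ?thesis by blast
qed

end

theorem lemma5:
  fixes R :: "(rat ^ 'n) set" and cor :: "rat ^ 'n \<Rightarrow> rat ^ 'n"
  assumes "root_system R cor" and "irreducible_rs R cor"
  shows "CARD('n) + 1 \<le> sep R cor \<and> sep R cor \<le> card (weyl_group R cor)"
proof -
  interpret root_sys R cor by unfold_locales (rule assms(1))
  have ex: "\<exists>Cs. length Cs = card W \<and> separating_seq R cor Cs"
    using ex_separating_seq_card_weyl_group[OF assms(2)] .
  then have "sep R cor \<le> card W" unfolding sep_def by (rule Least_le)
  moreover obtain Cs where "length Cs = sep R cor" and "separating_seq R cor Cs"
    using LeastI_ex[of "\<lambda>n. \<exists>Cs. length Cs = n \<and> separating_seq R cor Cs"] ex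
    unfolding sep_def by blast
  moreover have "R \<noteq> {}" using assms(2) by (simp add: irreducible_rs_def)
  ultimately show ?thesis using separating_seq_length by fastforce
qed

end
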